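(* Let $r\ge 2$ and $m$ be integers with $0\le 2m\le r$, $n=2r-4m$, and let $f:S^2(S^r(\mathbb{C}^2))\to S^{n}(\mathbb{C}^2)$ be an $\mathfrak{sl}_2(\mathbb{C})$-equivariant linear map, written $f=\sum_{k=0}^n q_k w_k$, each $q_k$ viewed as a symmetric bilinear form on $S^r(\mathbb{C}^2)$. Then for every $0\le k\le n/2$, $$\mathrm{rk}(q_k)=\mathrm{rk}(q_{n-k})\le 2m+k+1.$$
   Context: $\mathfrak{sl}_2(\mathbb{C})$ has basis $X=\begin{pmatrix}0&1\\0&0\end{pmatrix}$, $H=\begin{pmatrix}1&0\\0&-1\end{pmatrix}$, $Y=\begin{pmatrix}0&0\\1&0\end{pmatrix}$, acting on the irreducible modules $S^d(\mathbb{C}^2)$. Let $w_0\in S^n(\mathbb{C}^2)$ be a highest weight vector and $w_k=Y^kw_0/k!$ ($0\le k\le n$). Writing $f=\sum_{k=0}^n q_kw_k$ means $f(u)=\sum_k q_k(u)w_k$ for linear forms $q_k$ on $S^2(S^r(\mathbb{C}^2))$, equivalently symmetric bilinear forms $(u,v)\mapsto q_k(uv)$ on $S^r(\mathbb{C}^2)$; $\mathrm{rk}$ denotes the rank of the bilinear form. *)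

theory Defs
  imports "HOL-Analysis.Analysis" "Jordan_Normal_Form.DL_Rank"
begin

text \<open>Model of S^d(C^2): a vector is a coefficient function v :: nat => complex,
  where v i is the coefficient of the monomial x^(d-i) y^i (0 <= i <= d),
  and v i = 0 for i > d.  The sl_2 action is by the derivations
  X = x d/dy, H = x d/dx - y d/dy, Y = y d/dx.\<close>

definition symp :: "nat \<Rightarrow> (nat \<Rightarrow> complex) set" where
  "symp d = {v. \<forall>i>d. v i = 0}"

definition actX :: "nat \<Rightarrow> (nat \<Rightarrow> complex) \<Rightarrow> (nat \<Rightarrow> complex)" where
  "actX d v = (\<lambda>i. if i < d then of_nat (i + 1) * v (i + 1) else 0)"

definition actH :: "nat \<Rightarrow> (nat \<Rightarrow> complex) \<Rightarrow> (nat \<Rightarrow> complex)" where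
  "actH d v = (\<lambda>i. if i \<le> d then (of_nat d - 2 * of_nat i) * v i else 0)"

definition actY :: "nat \<Rightarrow> (nat \<Rightarrow> complex) \<Rightarrow> (nat \<Rightarrow> complex)" where
  "actY d v = (\<lambda>i. if 1 \<le> i \<and> i \<le> d then of_nat (d + 1 - i) * v (i - 1) else 0)"

definition ebasis :: "nat \<Rightarrow> (nat \<Rightarrow> complex)" where
  "ebasis i = (\<lambda>j. if j = i then 1 else 0)"

definition highest_weight_vector :: "nat \<Rightarrow> (nat \<Rightarrow> complex) \<Rightarrow> bool" where
  "highest_weight_vector d w \<longleftrightarrow> w \<in> symp d \<and> w \<noteq> (\<lambda>_. 0) \<and> actX d w = (\<lambda>_. 0)"

definition wvec :: "nat \<Rightarrow> (nat \<Rightarrow> complex) \<Rightarrow> nat \<Rightarrow> (nat \<Rightarrow> complex)" where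
  "wvec d w0 k = (\<lambda>i. ((actY d ^^ k) w0) i / of_nat (fact k))"

text \<open>A linear map f : S^2(S^r(C^2)) -> S^n(C^2) is given by the symmetric
  bilinear map B(u,v) = f(uv) on S^r(C^2).  It is sl_2-equivariant iff
  g.B(u,v) = B(g.u,v) + B(u,g.v) for g in {X,H,Y}.\<close>
definition equivariant_sym_bilinear ::
  "nat \<Rightarrow> nat \<Rightarrow> ((nat \<Rightarrow> complex) \<Rightarrow> (nat \<Rightarrow> complex) \<Rightarrow> (nat \<Rightarrow> complex)) \<Rightarrow> bool" where
  "equivariant_sym_bilinear r n B \<longleftrightarrow>
     (\<forall>u\<in>symp r. \<forall>v\<in>symp r. B u v \<in> symp n \<and> B u v = B v u) \<and>
     (\<forall>a b. \<forall>u\<in>symp r. \<forall>u'\<in>symp r. \<forall>v\<in>symp r.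
        B (\<lambda>i. a * u i + b * u' i) v = (\<lambda>i. a * B u v i + b * B u' v i)) \<and>
     (\<forall>u\<in>symp r. \<forall>v\<in>symp r.
        actX n (B u v) = (\<lambda>i. B (actX r u) v i + B u (actX r v) i) \<and>
        actH n (B u v) = (\<lambda>i. B (actH r u) v i + B u (actH r v) i) \<and>
        actY n (B u v) = (\<lambda>i. B (actY r u) v i + B u (actY r v) i))"

definition bilin_rank :: "nat \<Rightarrow> ((nat \<Rightarrow> complex) \<Rightarrow> (nat \<Rightarrow> complex) \<Rightarrow> complex) \<Rightarrow> nat" where
  "bilin_rank r q = vec_space.rank (r + 1)
      (mat (r + 1) (r + 1) (\<lambda>(i, j). q (ebasis i) (ebasis j)))"

end

(*
  By H-equivariance, B(e_a, e_c) is a multiple of w_(a+c-2m), so the Gram matrix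
  of q_k is supported on the antidiagonal a + c = k + 2m and its rank is the number of nonzero
  entries there, at most 2m + k + 1.  These coefficients t(a, c) satisfy a recursion coming from
  X-equivariance and relations on the lowest antidiagonal a + c = 2m coming from Y, which
  together determine t up to a scalar (S^n occurs at most once in S^2(S^r)).  The reflection
  t(r - a, r - c), i.e. swapping x and y, satisfies the same relations, so it is a multiple of t
  by a nonzero factor; as it maps the antidiagonal of q_k onto that of q_(n-k), the two ranks
  agree.
*)
theory Submission
  imports Defs
begin

section \<open>Rank of a matrix with at most one nonzero entry per row\<close>

lemma (in vec_space) lin_indpt_if_pivots:
  fixes U :: "'a vec set"
  assumes fin: "finite U" and carr: "U \<subseteq> carrier_vec n"
    and piv_lt: "\<And>v. v \<in> U \<Longrightarrow> p v < n"
    and piv_nz: "\<And>v. v \<in> U \<Longrightarrow> v $ p v \<noteq> 0"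
    and piv_other: "\<And>u v. u \<in> U \<Longrightarrow> v \<in> U \<Longrightarrow> u \<noteq> v \<Longrightarrow> u $ p v = 0"
  shows "lin_indpt U"
proof (rule finite_lin_indpt2[OF fin carr])
  fix a assume lc: "lincomb a U = 0\<^sub>v n"
  show "\<forall>v\<in>U. a v = 0"
  proof
    fix v assume v: "v \<in> U"
    have "0 = lincomb a U $ p v" using lc piv_lt[OF v] by simp
    also have "\<dots> = (\<Sum>u\<in>U. a u * u $ p v)" using lincomb_index[OF piv_lt[OF v] carr] .
    also have "\<dots> = a v * v $ p v"
      using piv_other[OF _ v] by (subst sum.remove[OF fin v]) (auto intro!: sum.neutral)
    finally show "a v = 0" using piv_nz[OF v] by simp
  qed
qed

text \<open>The nonzero columns have pairwise disjoint supports, so they form a basis of the column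
  space.\<close>
lemma (in vec_space) rank_eq_card_nonzero_cols:
  fixes A :: "'a mat"
  assumes A: "A \<in> carrier_mat n n"
    and row: "\<And>i j j'. i < n \<Longrightarrow> j < n \<Longrightarrow> j' < n \<Longrightarrow>
      A $$ (i, j) \<noteq> 0 \<Longrightarrow> A $$ (i, j') \<noteq> 0 \<Longrightarrow> j = j'"
  shows "rank A = card {j. j < n \<and> (\<exists>i<n. A $$ (i, j) \<noteq> 0)}"
proof -
  define J where "J = {j. j < n \<and> (\<exists>i<n. A $$ (i, j) \<noteq> 0)}"
  define p where "p v = (SOME i. i < n \<and> v $ i \<noteq> 0)" for v :: "'a vec"
  have col: "col A j $ i = A $$ (i, j)" if "j < n" "i < n" for i j
    using A that by auto
  have piv: "p (col A j) < n \<and> col A j $ p (col A j) \<noteq> 0" if "j \<in> J" for j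
  proof -
    have "\<exists>i. i < n \<and> col A j $ i \<noteq> 0" using that col by (auto simp: J_def)
    then show ?thesis unfolding p_def by (rule someI_ex)
  qed
  have piv_other: "col A j' $ p (col A j) = 0" if "j \<in> J" "j' \<in> J" "col A j' \<noteq> col A j" for j j'
    using row[of "p (col A j)" j j'] piv[OF that(1)] col that by (auto simp: J_def)
  have inj: "inj_on (col A) J"
  proof (rule inj_onI)
    fix j j' assume "j \<in> J" "j' \<in> J" "col A j = col A j'"
    then show "j = j'"
      using row[of "p (col A j)" j j'] piv[of j] col[of j] col[of j'] by (auto simp: J_def)
  qed
  have "finite J" by (simp add: J_def)
  define U where "U = col A ` J"
  have carr: "U \<subseteq> carrier_vec n" unfolding U_def J_def using A by auto
  have cols: "U \<subseteq> set (cols A)" unfolding U_def J_def using A by (auto simp: cols_def)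
  have indpt: "lin_indpt U"
  proof (rule lin_indpt_if_pivots[of U p])
    show "finite U" using \<open>finite J\<close> by (simp add: U_def)
    show "U \<subseteq> carrier_vec n" by (fact carr)
    show "p v < n" "v $ p v \<noteq> 0" if "v \<in> U" for v
      using that piv by (auto simp: U_def)
    show "u $ p v = 0" if "u \<in> U" "v \<in> U" "u \<noteq> v" for u v
      using that piv_other by (auto simp: U_def)
  qed
  have "maximal U (\<lambda>T. T \<subseteq> set (cols A) \<and> lin_indpt T)"
    unfolding maximal_def
  proof (intro conjI allI impI cols indpt)
    fix T assume T: "U \<subseteq> T \<and> T \<subseteq> set (cols A) \<and> lin_indpt T"
    have "T \<subseteq> carrier_vec n" using T A cols_dim by blast
    moreover have "(UNIV :: 'a set) \<noteq> {0}" by (metis UNIV_I singletonD zero_neq_one)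
    ultimately have "0\<^sub>v n \<notin> T" using zero_nin_lin_indpt T by blast
    have "v \<in> U" if "v \<in> T" for v
    proof -
      obtain j where j: "j < n" "v = col A j" using T A \<open>v \<in> T\<close> by (auto simp: cols_def)
      have "v \<noteq> 0\<^sub>v n" using \<open>0\<^sub>v n \<notin> T\<close> \<open>v \<in> T\<close> by auto
      then obtain i where "i < n" "v $ i \<noteq> 0" using j A by (auto simp: vec_eq_iff)
      then show "v \<in> U" using j col unfolding U_def J_def by auto
    qed
    with T show "T = U" by auto
  qed
  then have "rank A = card U" using rank_card_indpt[OF A] by blast
  also have "\<dots> = card J" unfolding U_def using card_image[OF inj] .
  finally show ?thesis unfolding J_def .
qed

section \<open>The action of sl_2 on monomials\<close>

lemma ebasis_in_symp: "a \<le> d \<Longrightarrow> ebasis a \<in> symp d"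
  unfolding symp_def ebasis_def by auto

lemma scale_in_symp: "u \<in> symp d \<Longrightarrow> (\<lambda>i. x * u i) \<in> symp d"
  unfolding symp_def by auto

lemma actY_in_symp: "actY d u \<in> symp d"
  unfolding actY_def symp_def by auto

lemma actH_ebasis: "a \<le> d \<Longrightarrow> actH d (ebasis a) = (\<lambda>i. (of_nat d - 2 * of_nat a) * ebasis a i)"
  unfolding actH_def ebasis_def by auto

lemma actX_ebasis: "a \<le> d \<Longrightarrow> actX d (ebasis a) = (\<lambda>i. of_nat a * ebasis (a - 1) i)"
  unfolding actX_def ebasis_def by (rule ext) auto

lemma actY_ebasis: "a < d \<Longrightarrow> actY d (ebasis a) = (\<lambda>i. of_nat (d - a) * ebasis (a + 1) i)"
  unfolding actY_def ebasis_def by (rule ext) (auto simp: of_nat_diff)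

lemma actY_ebasis_top: "actY d (ebasis d) = (\<lambda>i. 0)"
  unfolding actY_def ebasis_def by (rule ext) auto

lemma highest_weight_vector_vanishes:
  assumes "highest_weight_vector d w" "i \<noteq> 0"
  shows "w i = 0"
proof (cases "i \<le> d")
  case True
  have "actX d w (i - 1) = 0" using assms(1) unfolding highest_weight_vector_def by simp
  moreover have "i - 1 + 1 = i" "i - 1 < d" using True assms(2) by auto
  ultimately show ?thesis by (simp add: actX_def)
next
  case False
  then show ?thesis using assms(1) unfolding highest_weight_vector_def symp_def by auto
qed

lemma highest_weight_vector_nonzero:
  assumes "highest_weight_vector d w"
  shows "w 0 \<noteq> 0"
proof
  assume "w 0 = 0"
  then have "w = (\<lambda>_. 0)" using highest_weight_vector_vanishes[OF assms] by (metis ext)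
  then show False using assms unfolding highest_weight_vector_def by simp
qed

lemma actY_Suc: "actY d v (Suc i) = (if Suc i \<le> d then of_nat (d - i) * v i else 0)"
  by (simp add: actY_def)

lemma actY_funpow_concentrated:
  assumes "\<And>i. i \<noteq> 0 \<Longrightarrow> w i = 0"
  shows "(actY d ^^ k) w = (\<lambda>i. if i = k then of_nat (fact k * (d choose k)) * w 0 else 0)"
proof (induction k)
  case 0
  then show ?case using assms by (auto simp: fun_eq_iff)
next
  case (Suc k)
  have "(d - k) * (d choose k) = Suc k * (d choose Suc k)"
    using binomial_absorb_comp[of d k] times_binomial_minus1_eq[of "Suc k" d] by simp
  then have "(d - k) * (fact k * (d choose k)) = fact (Suc k) * (d choose Suc k)"
    by (simp add: algebra_simps)
  then have step: "of_nat (d - k) * (of_nat (fact k * (d choose k)) * w 0)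
      = of_nat (fact (Suc k) * (d choose Suc k)) * w 0"
    by (simp only: mult.assoc[symmetric] of_nat_mult[symmetric])
  show ?case
  proof (rule ext)
    fix i
    show "(actY d ^^ Suc k) w i
      = (if i = Suc k then of_nat (fact (Suc k) * (d choose Suc k)) * w 0 else 0)"
    proof (cases i)
      case 0
      then show ?thesis by (simp add: actY_def)
    next
      case (Suc j)
      then show ?thesis
        using Suc.IH step by (auto simp: actY_Suc binomial_eq_0 simp del: of_nat_mult)
    qed
  qed
qed

lemma wvec_highest_weight:
  assumes "highest_weight_vector d w0"
  shows "wvec d w0 k = (\<lambda>i. if i = k then of_nat (d choose k) * w0 0 else 0)"
proof (rule ext)
  fix i
  have "(actY d ^^ k) w0 i = (if i = k then fact k * (of_nat (d choose k) * w0 0) else 0)"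
    using actY_funpow_concentrated[where w = w0 and d = d and k = k]
      highest_weight_vector_vanishes[OF assms] by simp
  then show "wvec d w0 k i = (if i = k then of_nat (d choose k) * w0 0 else 0)"
    unfolding wvec_def by simp
qed

section \<open>Uniqueness of solutions of the recurrence\<close>

text \<open>Here t a c stands for the w_(a+c-2m)-component of B(e_a, e_c): X_recurrence is
  X-equivariance, Y_initial_relation is Y-equivariance in the component w_0.\<close>
definition X_recurrence :: "nat \<Rightarrow> nat \<Rightarrow> nat \<Rightarrow> (nat \<Rightarrow> nat \<Rightarrow> complex) \<Rightarrow> bool" where
  "X_recurrence r m n t \<longleftrightarrow>
     (\<forall>a c. a \<le> r \<longrightarrow> c \<le> r \<longrightarrow> 2 * m < a + c \<longrightarrow> a + c \<le> 2 * m + n \<longrightarrow>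
        of_nat (a + c - 2 * m) * t a c = of_nat a * t (a - 1) c + of_nat c * t a (c - 1))"

definition Y_initial_relation :: "nat \<Rightarrow> nat \<Rightarrow> (nat \<Rightarrow> nat \<Rightarrow> complex) \<Rightarrow> bool" where
  "Y_initial_relation r m t \<longleftrightarrow>
     (\<forall>a < 2 * m. of_nat (r - a) * t (a + 1) (2 * m - 1 - a)
        + of_nat (r - (2 * m - 1 - a)) * t a (2 * m - a) = 0)"

lemma X_recurrence_lincomb:
  assumes "X_recurrence r m n t" "X_recurrence r m n t'"
  shows "X_recurrence r m n (\<lambda>a c. x * t a c - y * t' a c)"
  unfolding X_recurrence_def
proof (intro allI impI)
  fix a c assume range: "a \<le> r" "c \<le> r" "2 * m < a + c" "a + c \<le> 2 * m + n"
  let ?N = "of_nat (a + c - 2 * m) :: complex"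
  have t: "?N * t a c = of_nat a * t (a - 1) c + of_nat c * t a (c - 1)"
    and t': "?N * t' a c = of_nat a * t' (a - 1) c + of_nat c * t' a (c - 1)"
    using assms range unfolding X_recurrence_def by blast+
  have "?N * (x * t a c - y * t' a c) = x * (?N * t a c) - y * (?N * t' a c)"
    by (simp add: algebra_simps)
  also have "\<dots> = of_nat a * (x * t (a - 1) c - y * t' (a - 1) c)
      + of_nat c * (x * t a (c - 1) - y * t' a (c - 1))"
    unfolding t t' by (simp add: algebra_simps)
  finally show "?N * (x * t a c - y * t' a c) = of_nat a * (x * t (a - 1) c - y * t' (a - 1) c)
      + of_nat c * (x * t a (c - 1) - y * t' a (c - 1))" .
qed

lemma Y_initial_relation_lincomb:
  assumes "Y_initial_relation r m t" "Y_initial_relation r m t'"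
  shows "Y_initial_relation r m (\<lambda>a c. x * t a c - y * t' a c)"
  unfolding Y_initial_relation_def
proof (intro allI impI)
  fix a assume "a < 2 * m"
  let ?P = "of_nat (r - a) :: complex" and ?Q = "of_nat (r - (2 * m - 1 - a)) :: complex"
  let ?c = "2 * m - 1 - a" and ?c' = "2 * m - a"
  have t: "?P * t (a + 1) ?c + ?Q * t a ?c' = 0" and t': "?P * t' (a + 1) ?c + ?Q * t' a ?c' = 0"
    using assms \<open>a < 2 * m\<close> unfolding Y_initial_relation_def by blast+
  have "?P * (x * t (a + 1) ?c - y * t' (a + 1) ?c) + ?Q * (x * t a ?c' - y * t' a ?c')
      = x * (?P * t (a + 1) ?c + ?Q * t a ?c') - y * (?P * t' (a + 1) ?c + ?Q * t' a ?c')"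
    by (simp add: algebra_simps)
  also have "\<dots> = 0" unfolding t t' by simp
  finally show "?P * (x * t (a + 1) ?c - y * t' (a + 1) ?c) + ?Q * (x * t a ?c' - y * t' a ?c') = 0" .
qed

lemma Y_initial_relation_vanishing:
  assumes "2 * m \<le> r" "Y_initial_relation r m t" "t 0 (2 * m) = 0" "a \<le> 2 * m"
  shows "t a (2 * m - a) = 0"
  using assms(4)
proof (induction a)
  case 0
  then show ?case using assms(3) by simp
next
  case (Suc a)
  then have "a < 2 * m" by simp
  then have "of_nat (r - a) * t (a + 1) (2 * m - 1 - a)
      + of_nat (r - (2 * m - 1 - a)) * t a (2 * m - a) = 0"
    using assms(2) unfolding Y_initial_relation_def by blast
  moreover have "t a (2 * m - a) = 0" using Suc by simp
  moreover have "r - a \<noteq> 0" using \<open>a < 2 * m\<close> assms(1) by simp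
  moreover have "2 * m - 1 - a = 2 * m - Suc a" by simp
  ultimately show ?case by simp
qed

text \<open>The relations determine a solution on the strip from its value at (0, 2m): the
  Y-relation propagates it along the bottom row a + c = 2m, and the X-recurrence (whose
  left coefficient a + c - 2m is nonzero above that row) upwards.\<close>
lemma recurrence_solution_vanishing:
  assumes "X_recurrence r m n t" "Y_initial_relation r m t" "2 * m \<le> r" "t 0 (2 * m) = 0"
    and "a \<le> r" "c \<le> r" "2 * m \<le> a + c" "a + c \<le> 2 * m + n"
  shows "t a c = 0"
  using assms(5-)
proof (induction "a + c - 2 * m" arbitrary: a c)
  case 0
  then have "c = 2 * m - a" "a \<le> 2 * m" by auto
  then show ?case using Y_initial_relation_vanishing[OF assms(3,2,4)] by simp
next
  case (Suc s)
  have left: "t (a - 1) c = 0" if "a \<noteq> 0"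
    using Suc.hyps(1)[of "a - 1" c] Suc.hyps(2) Suc.prems that by auto
  have right: "t a (c - 1) = 0" if "c \<noteq> 0"
    using Suc.hyps(1)[of a "c - 1"] Suc.hyps(2) Suc.prems that by auto
  have "of_nat (a + c - 2 * m) * t a c = of_nat a * t (a - 1) c + of_nat c * t a (c - 1)"
    using assms(1) Suc.hyps(2) Suc.prems unfolding X_recurrence_def by auto
  also have "\<dots> = 0" using left right by (cases "a = 0"; cases "c = 0") auto
  finally have "of_nat (a + c - 2 * m) * t a c = 0" .
  moreover have "a + c - 2 * m \<noteq> 0" using Suc.hyps(2) by simp
  ultimately show ?case by (metis mult_eq_0_iff of_nat_eq_0_iff)
qed

lemma recurrence_solutions_proportional:
  assumes "2 * m \<le> r"
    and "X_recurrence r m n t" "Y_initial_relation r m t"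
    and "X_recurrence r m n t'" "Y_initial_relation r m t'"
    and "a \<le> r" "c \<le> r" "2 * m \<le> a + c" "a + c \<le> 2 * m + n"
  shows "t' 0 (2 * m) * t a c = t 0 (2 * m) * t' a c"
proof -
  let ?d = "\<lambda>a c. t' 0 (2 * m) * t a c - t 0 (2 * m) * t' a c"
  have "?d a c = 0"
    by (rule recurrence_solution_vanishing[of r m n ?d])
      (use assms X_recurrence_lincomb[OF assms(2,4)] Y_initial_relation_lincomb[OF assms(3,5)]
        in \<open>simp_all\<close>)
  then show ?thesis by simp
qed

section \<open>Equivariant symmetric bilinear maps\<close>

locale equivariant_form =
  fixes r m n :: nat
    and B :: "(nat \<Rightarrow> complex) \<Rightarrow> (nat \<Rightarrow> complex) \<Rightarrow> (nat \<Rightarrow> complex)"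
  assumes two_m_le: "2 * m \<le> r"
    and n_eq: "n = 2 * r - 4 * m"
    and equivariant: "equivariant_sym_bilinear r n B"
begin

lemma B_commute: "u \<in> symp r \<Longrightarrow> v \<in> symp r \<Longrightarrow> B u v = B v u"
  and B_in_symp: "u \<in> symp r \<Longrightarrow> v \<in> symp r \<Longrightarrow> B u v \<in> symp n"
  and B_linear_left: "u \<in> symp r \<Longrightarrow> u' \<in> symp r \<Longrightarrow> v \<in> symp r \<Longrightarrow>
    B (\<lambda>i. x * u i + y * u' i) v = (\<lambda>i. x * B u v i + y * B u' v i)"
  and B_actX: "u \<in> symp r \<Longrightarrow> v \<in> symp r \<Longrightarrow>
    actX n (B u v) = (\<lambda>i. B (actX r u) v i + B u (actX r v) i)"
  and B_actH: "u \<in> symp r \<Longrightarrow> v \<in> symp r \<Longrightarrow>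
    actH n (B u v) = (\<lambda>i. B (actH r u) v i + B u (actH r v) i)"
  and B_actY: "u \<in> symp r \<Longrightarrow> v \<in> symp r \<Longrightarrow>
    actY n (B u v) = (\<lambda>i. B (actY r u) v i + B u (actY r v) i)"
  using equivariant unfolding equivariant_sym_bilinear_def by auto

lemma B_scale_left: "u \<in> symp r \<Longrightarrow> v \<in> symp r \<Longrightarrow> B (\<lambda>i. x * u i) v = (\<lambda>i. x * B u v i)"
  using B_linear_left[of u u v x 0] by simp

lemma B_scale_right: "u \<in> symp r \<Longrightarrow> v \<in> symp r \<Longrightarrow> B u (\<lambda>i. x * v i) = (\<lambda>i. x * B u v i)"
  using B_scale_left[of v u x] B_commute[of u "\<lambda>i. x * v i"] B_commute[of u v] scale_in_symp[of v r x]
  by simp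

lemma B_zero_left: "v \<in> symp r \<Longrightarrow> B (\<lambda>i. 0) v = (\<lambda>i. 0)"
  using B_scale_left[of "ebasis 0" v 0] ebasis_in_symp[of 0 r] by simp

text \<open>Zero for a or c beyond r, so that boundary terms in the X- and Y-relations below need no
  separate treatment.\<close>
definition basis_coeff :: "nat \<Rightarrow> nat \<Rightarrow> nat \<Rightarrow> complex" where
  "basis_coeff a c i = (if a \<le> r \<and> c \<le> r then B (ebasis a) (ebasis c) i else 0)"

lemma basis_coeff_commute: "basis_coeff a c i = basis_coeff c a i"
  unfolding basis_coeff_def using B_commute ebasis_in_symp by auto

lemma B_actY_ebasis_left:
  assumes "a \<le> r" "c \<le> r"
  shows "B (actY r (ebasis a)) (ebasis c) i = of_nat (r - a) * basis_coeff (a + 1) c i"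
proof (cases "a < r")
  case True
  then show ?thesis
    using actY_ebasis[OF True] B_scale_left[of "ebasis (a + 1)" "ebasis c"] ebasis_in_symp assms
    by (simp add: basis_coeff_def)
next
  case False
  then have "a = r" using assms by simp
  then show ?thesis using actY_ebasis_top B_zero_left ebasis_in_symp[OF \<open>c \<le> r\<close>] by simp
qed

lemma basis_coeff_weight:
  assumes nonzero: "basis_coeff a c i \<noteq> 0"
  shows "i \<le> n \<and> a + c = i + 2 * m"
proof -
  have range: "a \<le> r" "c \<le> r" using nonzero by (auto simp: basis_coeff_def split: if_splits)
  have ea: "ebasis a \<in> symp r" and ec: "ebasis c \<in> symp r" using ebasis_in_symp range by auto
  have coeff: "B (ebasis a) (ebasis c) i = basis_coeff a c i" using range by (simp add: basis_coeff_def)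
  have "i \<le> n"
  proof (rule ccontr)
    assume "\<not> i \<le> n"
    then show False using B_in_symp[OF ea ec] nonzero coeff unfolding symp_def by auto
  qed
  have "actH n (B (ebasis a) (ebasis c)) i
      = B (actH r (ebasis a)) (ebasis c) i + B (ebasis a) (actH r (ebasis c)) i"
    using B_actH[OF ea ec] by metis
  then have "(of_nat n - 2 * of_nat i) * basis_coeff a c i
      = (of_nat r - 2 * of_nat a) * basis_coeff a c i + (of_nat r - 2 * of_nat c) * basis_coeff a c i"
    using actH_ebasis range B_scale_left[OF ea ec] B_scale_right[OF ea ec] coeff \<open>i \<le> n\<close>
    by (simp add: actH_def)
  then have "(of_nat n - 2 * of_nat i :: complex) = (of_nat r - 2 * of_nat a) + (of_nat r - 2 * of_nat c)"
    using nonzero by (metis distrib_right mult_cancel_right)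
  then have "(of_nat (n + 2 * a + 2 * c) :: complex) = of_nat (2 * r + 2 * i)"
    by (simp add: algebra_simps)
  then have "n + 2 * a + 2 * c = 2 * r + 2 * i" using of_nat_eq_iff by blast
  then show ?thesis using \<open>i \<le> n\<close> n_eq two_m_le by auto
qed

lemma basis_coeff_X:
  assumes "a \<le> r" "c \<le> r"
  shows "(if i < n then of_nat (i + 1) * basis_coeff a c (i + 1) else 0)
    = of_nat a * basis_coeff (a - 1) c i + of_nat c * basis_coeff a (c - 1) i"
proof -
  have ea: "ebasis a \<in> symp r" and ec: "ebasis c \<in> symp r"
    and ea': "ebasis (a - 1) \<in> symp r" and ec': "ebasis (c - 1) \<in> symp r"
    using ebasis_in_symp assms by auto
  have bounds: "a - 1 \<le> r" "c - 1 \<le> r" using assms by auto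
  have "(if i < n then of_nat (i + 1) * basis_coeff a c (i + 1) else 0)
      = actX n (B (ebasis a) (ebasis c)) i"
    using assms by (simp add: actX_def basis_coeff_def)
  also have "\<dots> = B (actX r (ebasis a)) (ebasis c) i + B (ebasis a) (actX r (ebasis c)) i"
    using B_actX[OF ea ec] by metis
  also have "\<dots> = of_nat a * basis_coeff (a - 1) c i + of_nat c * basis_coeff a (c - 1) i"
    using actX_ebasis assms bounds B_scale_left[OF ea' ec] B_scale_right[OF ea ec']
    by (simp add: basis_coeff_def)
  finally show ?thesis .
qed

lemma basis_coeff_Y:
  assumes "a \<le> r" "c \<le> r"
  shows "(if 1 \<le> i \<and> i \<le> n then of_nat (n + 1 - i) * basis_coeff a c (i - 1) else 0)
    = of_nat (r - a) * basis_coeff (a + 1) c i + of_nat (r - c) * basis_coeff a (c + 1) i"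
proof -
  have ea: "ebasis a \<in> symp r" and ec: "ebasis c \<in> symp r" using ebasis_in_symp assms by auto
  have "(if 1 \<le> i \<and> i \<le> n then of_nat (n + 1 - i) * basis_coeff a c (i - 1) else 0)
      = actY n (B (ebasis a) (ebasis c)) i"
    using assms by (simp add: actY_def basis_coeff_def)
  also have "\<dots> = B (actY r (ebasis a)) (ebasis c) i + B (actY r (ebasis c)) (ebasis a) i"
    using B_actY[OF ea ec] B_commute[OF ea actY_in_symp] by metis
  also have "\<dots> = of_nat (r - a) * basis_coeff (a + 1) c i + of_nat (r - c) * basis_coeff a (c + 1) i"
    using B_actY_ebasis_left assms basis_coeff_commute by metis
  finally show ?thesis .
qed

definition diag_coeff :: "nat \<Rightarrow> nat \<Rightarrow> complex" where
  "diag_coeff a c = basis_coeff a c (a + c - 2 * m)"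

lemma diag_coeff_X_recurrence: "X_recurrence r m n diag_coeff"
  unfolding X_recurrence_def
proof (intro allI impI)
  fix a c assume range: "a \<le> r" "c \<le> r" "2 * m < a + c" "a + c \<le> 2 * m + n"
  define i where "i = a + c - 2 * m - 1"
  have "i < n" "i + 1 = a + c - 2 * m" using range unfolding i_def by auto
  then have "of_nat (a + c - 2 * m) * diag_coeff a c
      = of_nat a * basis_coeff (a - 1) c i + of_nat c * basis_coeff a (c - 1) i"
    using basis_coeff_X[OF range(1,2), of i] by (simp add: diag_coeff_def)
  also have "\<dots> = of_nat a * diag_coeff (a - 1) c + of_nat c * diag_coeff a (c - 1)"
    using range by (cases "a = 0"; cases "c = 0") (auto simp: diag_coeff_def i_def)
  finally show "of_nat (a + c - 2 * m) * diag_coeff a c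
      = of_nat a * diag_coeff (a - 1) c + of_nat c * diag_coeff a (c - 1)" .
qed

lemma diag_coeff_Y_initial_relation: "Y_initial_relation r m diag_coeff"
  unfolding Y_initial_relation_def
proof (intro allI impI)
  fix a assume "a < 2 * m"
  then have "of_nat (r - a) * basis_coeff (a + 1) (2 * m - 1 - a) 0
      + of_nat (r - (2 * m - 1 - a)) * basis_coeff a (2 * m - a) 0 = 0"
    using basis_coeff_Y[of a "2 * m - 1 - a" 0] two_m_le by (simp add: Suc_diff_Suc)
  moreover have "a + 1 + (2 * m - 1 - a) - 2 * m = 0" "a + (2 * m - a) - 2 * m = 0"
    using \<open>a < 2 * m\<close> by auto
  ultimately show "of_nat (r - a) * diag_coeff (a + 1) (2 * m - 1 - a)
      + of_nat (r - (2 * m - 1 - a)) * diag_coeff a (2 * m - a) = 0"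
    unfolding diag_coeff_def by simp
qed

lemma diag_coeff_Y_step:
  assumes range: "a \<le> r" "c \<le> r" "2 * m \<le> a + c" "a + c < 2 * m + n"
  shows "of_nat (2 * m + n - (a + c)) * diag_coeff a c
    = of_nat (r - a) * diag_coeff (a + 1) c + of_nat (r - c) * diag_coeff a (c + 1)"
proof -
  define j where "j = a + c - 2 * m + 1"
  have "1 \<le> j" "j \<le> n" "j - 1 = a + c - 2 * m" "n + 1 - j = 2 * m + n - (a + c)"
    "a + 1 + c - 2 * m = j" "a + (c + 1) - 2 * m = j"
    using range unfolding j_def by auto
  then show ?thesis using basis_coeff_Y[OF range(1,2), of j] unfolding diag_coeff_def by simp
qed

lemma diag_coeff_X_top:
  assumes range: "a \<le> r" "c \<le> r" "a + c = 2 * m + n + 1"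
  shows "of_nat a * diag_coeff (a - 1) c + of_nat c * diag_coeff a (c - 1) = 0"
proof -
  have "0 = of_nat a * basis_coeff (a - 1) c n + of_nat c * basis_coeff a (c - 1) n"
    using basis_coeff_X[OF range(1,2), of n] by simp
  also have "\<dots> = of_nat a * diag_coeff (a - 1) c + of_nat c * diag_coeff a (c - 1)"
    using range by (cases "a = 0"; cases "c = 0") (auto simp: diag_coeff_def)
  finally show ?thesis by simp
qed

text \<open>Reflecting (a, c) to (r - a, r - c) swaps x and y, which interchanges the roles of X
  and Y: the Y-relations of diag_coeff become the X-relations of its reflection.\<close>
lemma reflected_X_recurrence: "X_recurrence r m n (\<lambda>a c. diag_coeff (r - a) (r - c))"
  unfolding X_recurrence_def
proof (intro allI impI)
  fix a c assume range: "a \<le> r" "c \<le> r" "2 * m < a + c" "a + c \<le> 2 * m + n"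
  have Y: "of_nat (2 * m + n - (r - a + (r - c))) * diag_coeff (r - a) (r - c)
      = of_nat (r - (r - a)) * diag_coeff (r - a + 1) (r - c)
        + of_nat (r - (r - c)) * diag_coeff (r - a) (r - c + 1)"
    by (rule diag_coeff_Y_step) (use range n_eq two_m_le in auto)
  have shift: "2 * m + n - (r - a + (r - c)) = a + c - 2 * m" "r - (r - a) = a" "r - (r - c) = c"
    using range n_eq two_m_le by auto
  have left: "of_nat a * diag_coeff (r - a + 1) (r - c) = of_nat a * diag_coeff (r - (a - 1)) (r - c)"
    by (cases "a = 0") (use range in \<open>simp_all add: Suc_diff_le\<close>)
  have right: "of_nat c * diag_coeff (r - a) (r - c + 1) = of_nat c * diag_coeff (r - a) (r - (c - 1))"
    by (cases "c = 0") (use range in \<open>simp_all add: Suc_diff_le\<close>)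
  from Y show "of_nat (a + c - 2 * m) * diag_coeff (r - a) (r - c)
      = of_nat a * diag_coeff (r - (a - 1)) (r - c) + of_nat c * diag_coeff (r - a) (r - (c - 1))"
    unfolding shift left right .
qed

lemma reflected_Y_initial_relation: "Y_initial_relation r m (\<lambda>a c. diag_coeff (r - a) (r - c))"
  unfolding Y_initial_relation_def
proof (intro allI impI)
  fix a assume "a < 2 * m"
  have X: "of_nat (r - a) * diag_coeff (r - a - 1) (r - (2 * m - 1 - a))
      + of_nat (r - (2 * m - 1 - a)) * diag_coeff (r - a) (r - (2 * m - 1 - a) - 1) = 0"
    by (rule diag_coeff_X_top) (use \<open>a < 2 * m\<close> two_m_le n_eq in auto)
  have shift: "r - (2 * m - 1 - a) - 1 = r - (2 * m - a)" "r - a - 1 = r - (a + 1)"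
    using \<open>a < 2 * m\<close> two_m_le by auto
  from X show "of_nat (r - a) * diag_coeff (r - (a + 1)) (r - (2 * m - 1 - a))
      + of_nat (r - (2 * m - 1 - a)) * diag_coeff (r - a) (r - (2 * m - a)) = 0"
    unfolding shift .
qed

lemma diag_coeff_reflect_nonzero_iff:
  assumes range: "a \<le> r" "c \<le> r" "2 * m \<le> a + c" "a + c \<le> 2 * m + n"
  shows "diag_coeff (r - a) (r - c) \<noteq> 0 \<longleftrightarrow> diag_coeff a c \<noteq> 0"
proof -
  let ?t = diag_coeff and ?t' = "\<lambda>a c. diag_coeff (r - a) (r - c)"
  note solutions = diag_coeff_X_recurrence diag_coeff_Y_initial_relation
    reflected_X_recurrence reflected_Y_initial_relation
  have proportional: "?t' 0 (2 * m) * ?t a c = ?t 0 (2 * m) * ?t' a c"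
    if "a \<le> r" "c \<le> r" "2 * m \<le> a + c" "a + c \<le> 2 * m + n" for a c
    using recurrence_solutions_proportional[OF two_m_le solutions] that by blast
  have "?t' 0 (2 * m) * ?t' 0 (2 * m) = ?t 0 (2 * m) * ?t 0 (2 * m)"
    using proportional[of r "r - 2 * m"] two_m_le n_eq by simp
  then have same_zero: "?t' 0 (2 * m) = 0 \<longleftrightarrow> ?t 0 (2 * m) = 0" by auto
  show ?thesis
  proof (cases "?t 0 (2 * m) = 0")
    case True
    then have "?t a c = 0" "?t' a c = 0"
      using recurrence_solution_vanishing[OF diag_coeff_X_recurrence diag_coeff_Y_initial_relation two_m_le]
        recurrence_solution_vanishing[OF reflected_X_recurrence reflected_Y_initial_relation two_m_le]
        same_zero range by auto
    then show ?thesis by simp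
  next
    case False
    then show ?thesis using proportional[OF range] same_zero by auto
  qed
qed

end

section \<open>Ranks of the components q_k\<close>

locale equivariant_form_expansion = equivariant_form +
  fixes w0 :: "nat \<Rightarrow> complex"
    and q :: "nat \<Rightarrow> (nat \<Rightarrow> complex) \<Rightarrow> (nat \<Rightarrow> complex) \<Rightarrow> complex"
  assumes highest_weight: "highest_weight_vector n w0"
    and expansion: "\<forall>u\<in>symp r. \<forall>v\<in>symp r. B u v = (\<lambda>i. \<Sum>k\<le>n. q k u v * wvec n w0 k i)"
begin

lemma basis_coeff_eq_q:
  assumes "a \<le> r" "c \<le> r" "i \<le> n"
  shows "basis_coeff a c i = q i (ebasis a) (ebasis c) * (of_nat (n choose i) * w0 0)"
proof -
  have "basis_coeff a c i = (\<Sum>k\<le>n. q k (ebasis a) (ebasis c) * wvec n w0 k i)"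
    using expansion ebasis_in_symp[OF assms(1)] ebasis_in_symp[OF assms(2)] assms(1,2)
    by (simp add: basis_coeff_def)
  also have "\<dots> = (\<Sum>k\<le>n. if k = i then q k (ebasis a) (ebasis c) * (of_nat (n choose k) * w0 0) else 0)"
    by (rule sum.cong) (simp_all add: wvec_highest_weight[OF highest_weight])
  also have "\<dots> = q i (ebasis a) (ebasis c) * (of_nat (n choose i) * w0 0)"
    using assms(3) by (simp add: sum.delta)
  finally show ?thesis .
qed

lemma q_ebasis_nonzero_iff:
  assumes "a \<le> r" "c \<le> r" "k \<le> n"
  shows "q k (ebasis a) (ebasis c) \<noteq> 0 \<longleftrightarrow> a + c = k + 2 * m \<and> diag_coeff a c \<noteq> 0"
proof -
  have "n choose k \<noteq> 0" using assms(3) by simp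
  then have "q k (ebasis a) (ebasis c) \<noteq> 0 \<longleftrightarrow> basis_coeff a c k \<noteq> 0"
    using basis_coeff_eq_q[OF assms] highest_weight_vector_nonzero[OF highest_weight] by simp
  also have "\<dots> \<longleftrightarrow> a + c = k + 2 * m \<and> diag_coeff a c \<noteq> 0"
  proof
    assume "basis_coeff a c k \<noteq> 0"
    moreover from this have "a + c = k + 2 * m" using basis_coeff_weight by blast
    ultimately show "a + c = k + 2 * m \<and> diag_coeff a c \<noteq> 0" by (simp add: diag_coeff_def)
  qed (metis diag_coeff_def add_diff_cancel_right')
  finally show ?thesis .
qed

definition nonzero_cols :: "nat \<Rightarrow> nat set" where
  "nonzero_cols k = {c. c \<le> r \<and> (\<exists>a\<le>r. a + c = k + 2 * m \<and> diag_coeff a c \<noteq> 0)}"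

lemma bilin_rank_eq_card_nonzero_cols:
  assumes "k \<le> n"
  shows "bilin_rank r (q k) = card (nonzero_cols k)"
proof -
  let ?A = "mat (r + 1) (r + 1) (\<lambda>(i, j). q k (ebasis i) (ebasis j))"
  have entry: "?A $$ (i, j) \<noteq> 0 \<longleftrightarrow> i + j = k + 2 * m \<and> diag_coeff i j \<noteq> 0"
    if "i \<le> r" "j \<le> r" for i j
    using q_ebasis_nonzero_iff[of i j k] that assms by simp
  have "vec_space.rank (r + 1) ?A = card {j. j < r + 1 \<and> (\<exists>i<r + 1. ?A $$ (i, j) \<noteq> 0)}"
  proof (rule vec_space.rank_eq_card_nonzero_cols)
    fix i j j' assume "i < r + 1" "j < r + 1" "j' < r + 1" "?A $$ (i, j) \<noteq> 0" "?A $$ (i, j') \<noteq> 0"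
    then show "j = j'" using entry by (simp add: less_Suc_eq_le del: index_mat)
  qed simp
  also have "{j. j < r + 1 \<and> (\<exists>i<r + 1. ?A $$ (i, j) \<noteq> 0)} = nonzero_cols k"
    unfolding nonzero_cols_def using entry by (auto simp: less_Suc_eq_le simp del: index_mat)
  finally show ?thesis unfolding bilin_rank_def .
qed

lemma card_nonzero_cols_le: "card (nonzero_cols k) \<le> 2 * m + k + 1"
proof -
  have "nonzero_cols k \<subseteq> {..k + 2 * m}" unfolding nonzero_cols_def by auto
  then have "card (nonzero_cols k) \<le> card {..k + 2 * m}" by (rule card_mono[rotated]) simp
  then show ?thesis by simp
qed

lemma nonzero_cols_reflect:
  assumes "k \<le> n"
  shows "nonzero_cols k = (\<lambda>c. r - c) ` nonzero_cols (n - k)"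
proof (intro equalityI subsetI)
  fix c assume "c \<in> nonzero_cols k"
  then obtain a where c: "c \<le> r" "a \<le> r" "a + c = k + 2 * m" "diag_coeff a c \<noteq> 0"
    unfolding nonzero_cols_def by auto
  moreover have "2 * m \<le> a + c" "a + c \<le> 2 * m + n" "r - a + (r - c) = n - k + 2 * m"
    using c assms n_eq two_m_le by auto
  ultimately have "r - a \<le> r" "r - a + (r - c) = n - k + 2 * m" "diag_coeff (r - a) (r - c) \<noteq> 0"
    using diag_coeff_reflect_nonzero_iff[of a c] by auto
  then have "r - c \<in> nonzero_cols (n - k)" unfolding nonzero_cols_def by (auto intro!: exI[of _ "r - a"])
  moreover have "c = r - (r - c)" using c by simp
  ultimately show "c \<in> (\<lambda>c. r - c) ` nonzero_cols (n - k)" by blast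
next
  fix x assume "x \<in> (\<lambda>c. r - c) ` nonzero_cols (n - k)"
  then obtain c a where c: "x = r - c" "c \<le> r" "a \<le> r" "a + c = n - k + 2 * m" "diag_coeff a c \<noteq> 0"
    unfolding nonzero_cols_def by auto
  moreover have "2 * m \<le> a + c" "a + c \<le> 2 * m + n" "r - a + (r - c) = k + 2 * m"
    using c assms n_eq two_m_le by auto
  ultimately have "x \<le> r" "r - a + x = k + 2 * m" "diag_coeff (r - a) x \<noteq> 0"
    using diag_coeff_reflect_nonzero_iff[of a c] by auto
  then show "x \<in> nonzero_cols k" unfolding nonzero_cols_def by (auto intro!: exI[of _ "r - a"])
qed

lemma card_nonzero_cols_reflect:
  assumes "k \<le> n"
  shows "card (nonzero_cols (n - k)) = card (nonzero_cols k)"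
proof -
  have "inj_on (\<lambda>c. r - c) (nonzero_cols (n - k))"
    unfolding nonzero_cols_def by (rule inj_onI) auto
  then show ?thesis using nonzero_cols_reflect[OF assms] by (simp add: card_image)
qed

end

theorem mainTheorem5:
  fixes r m n :: nat
    and B :: "(nat \<Rightarrow> complex) \<Rightarrow> (nat \<Rightarrow> complex) \<Rightarrow> (nat \<Rightarrow> complex)"
    and w0 :: "nat \<Rightarrow> complex"
    and q :: "nat \<Rightarrow> (nat \<Rightarrow> complex) \<Rightarrow> (nat \<Rightarrow> complex) \<Rightarrow> complex"
  assumes "r \<ge> 2"
    and "2 * m \<le> r"
    and "n = 2 * r - 4 * m"
    and "equivariant_sym_bilinear r n B"
    and "highest_weight_vector n w0"
    and "\<forall>u\<in>symp r. \<forall>v\<in>symp r.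
           B u v = (\<lambda>i. \<Sum>k\<le>n. q k u v * wvec n w0 k i)"
  shows "\<forall>k. 2 * k \<le> n \<longrightarrow>
           bilin_rank r (q k) = bilin_rank r (q (n - k)) \<and>
           bilin_rank r (q k) \<le> 2 * m + k + 1"
proof (intro allI impI)
  interpret equivariant_form_expansion r m n B w0 q
    using assms(2-) by unfold_locales auto
  fix k assume "2 * k \<le> n"
  then have "k \<le> n" by simp
  then show "bilin_rank r (q k) = bilin_rank r (q (n - k)) \<and> bilin_rank r (q k) \<le> 2 * m + k + 1"
    using bilin_rank_eq_card_nonzero_cols[of k] bilin_rank_eq_card_nonzero_cols[of "n - k"]
      card_nonzero_cols_reflect card_nonzero_cols_le[of k] by simp
qed

end
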